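(* Let $a_1,a_2,\gamma_1,\zeta\in\mathbb R$ with $a_1,a_2\neq0$, $|a_1|\neq|a_2|$, and consider the equation $\mathcal Q_+=0$ with coefficients $\alpha_1=\beta_1=\dfrac{(a_1+a_2)\gamma_1}{2a_1}$, $\alpha_2=\beta_2=0$, $\gamma_2=\dfrac{a_2\gamma_1}{a_1}$, $\xi_1=\xi_2=\dfrac{3(a_1+a_2)\gamma_1^2}{8a_1^2}$, $\xi_3=\xi_4=\dfrac{(a_1-a_2)\gamma_1^2}{8a_1^2}$. This equation can be linearized by a real Möbius transformation $u_{n,m}=\dfrac{\alpha v_{n,m}+\beta}{\gamma v_{n,m}+\delta}$ (applied simultaneously at all lattice points, $\alpha\delta-\beta\gamma\neq0$) into the linear equation $$v_{n,m}+v_{n+1,m+1}+\frac{a_2}{a_1}\big(v_{n+1,m}+v_{n,m+1}\big)=0$$ if and only if $\zeta=\dfrac{(a_1+a_2)\gamma_1^3}{4a_1^3}$. In that case a linearizing transformation is given by $\beta=0$, $\gamma=-\dfrac{\alpha\gamma_1}{2a_1}$ (with $\alpha,\delta\neq0$ arbitrary).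
   Context: Let $u:\mathbb Z^2\to\mathbb R$. The equation $\mathcal Q_+=0$ is $a_1(u_{n,m}+u_{n+1,m+1})+a_2(u_{n+1,m}+u_{n,m+1})+(\alpha_1-\alpha_2)u_{n,m}u_{n+1,m}+(\alpha_1+\alpha_2)u_{n,m+1}u_{n+1,m+1}+(\beta_1-\beta_2)u_{n,m}u_{n,m+1}+(\beta_1+\beta_2)u_{n+1,m}u_{n+1,m+1}+\gamma_1u_{n,m}u_{n+1,m+1}+\gamma_2u_{n+1,m}u_{n,m+1}+(\xi_1-\xi_3)u_{n,m}u_{n+1,m}u_{n,m+1}+(\xi_1+\xi_3)u_{n,m}u_{n+1,m}u_{n+1,m+1}+(\xi_2-\xi_4)u_{n+1,m}u_{n,m+1}u_{n+1,m+1}+(\xi_2+\xi_4)u_{n,m}u_{n,m+1}u_{n+1,m+1}+\zeta u_{n,m}u_{n+1,m}u_{n,m+1}u_{n+1,m+1}=0$. "Linearized by the Möbius transformation into the linear equation" means: substituting $u_{k,l}=(\alpha v_{k,l}+\beta)/(\gamma v_{k,l}+\delta)$ for the four lattice values and multiplying by the product of the four denominators yields a nonzero constant multiple of the stated linear equation in $v$. *)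

theory Defs
  imports Complex_Main
begin

text \<open>Left-hand side of Q_+ = 0 with x = u(n,m), y = u(n+1,m), z = u(n,m+1), w = u(n+1,m+1).\<close>
definition Qplus ::
  "real \<Rightarrow> real \<Rightarrow> real \<Rightarrow> real \<Rightarrow> real \<Rightarrow> real \<Rightarrow> real \<Rightarrow> real \<Rightarrow> real \<Rightarrow> real \<Rightarrow> real \<Rightarrow> real \<Rightarrow> real
   \<Rightarrow> real \<Rightarrow> real \<Rightarrow> real \<Rightarrow> real \<Rightarrow> real" where
  "Qplus a1 a2 al1 al2 be1 be2 ga1 ga2 xi1 xi2 xi3 xi4 ze x y z w =
     a1 * (x + w) + a2 * (y + z)
     + (al1 - al2) * x * y + (al1 + al2) * z * w
     + (be1 - be2) * x * z + (be1 + be2) * y * w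
     + ga1 * x * w + ga2 * y * z
     + (xi1 - xi3) * x * y * z + (xi1 + xi3) * x * y * w
     + (xi2 - xi4) * y * z * w + (xi2 + xi4) * x * z * w
     + ze * x * y * z * w"

definition moeb :: "real \<Rightarrow> real \<Rightarrow> real \<Rightarrow> real \<Rightarrow> real \<Rightarrow> real" where
  "moeb A B C D v = (A * v + B) / (C * v + D)"

definition linearizes ::
  "(real \<Rightarrow> real \<Rightarrow> real \<Rightarrow> real \<Rightarrow> real) \<Rightarrow> (real \<Rightarrow> real \<Rightarrow> real \<Rightarrow> real \<Rightarrow> real)
   \<Rightarrow> real \<Rightarrow> real \<Rightarrow> real \<Rightarrow> real \<Rightarrow> bool" where
  "linearizes Q L A B C D \<longleftrightarrow>
     (\<exists>c::real. c \<noteq> 0 \<and>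
       (\<forall>v1 v2 v3 v4. C * v1 + D \<noteq> 0 \<longrightarrow> C * v2 + D \<noteq> 0 \<longrightarrow> C * v3 + D \<noteq> 0 \<longrightarrow> C * v4 + D \<noteq> 0 \<longrightarrow>
          (C * v1 + D) * (C * v2 + D) * (C * v3 + D) * (C * v4 + D) *
            Q (moeb A B C D v1) (moeb A B C D v2) (moeb A B C D v3) (moeb A B C D v4)
          = c * L v1 v2 v3 v4))"

end

theory Submission imports Defs begin

(* Clearing the denominators of a Moebius substitution u = (A v + B)/(C v + D)
   turns Q_+ into its homogenization qhom, a form that is linear in each of the four
   homogeneous pairs (numerator, denominator).  Along the pencil (A v + B, C v + D) such a form
   is affine in v, so an identity "qhom (pencil) = c * L" valid for all admissible v pins down
   the values of qhom on the basis (A,C), (B,D) slot by slot.  Since L has no mixed terms, the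
   form must vanish on (A,C),(A,C),*,* and on *,(A,C),(A,C),(A,C) whenever the last argument
   runs over the basis; as det [A B; C D] is nonzero, linearity extends this to all pairs.
   Evaluating at the unit pairs gives three polynomial conditions which, for the coefficients
   of the theorem, force C = -A ga1/(2 a1) and the stated value of zeta (necessity).
   Sufficiency is a direct computation with that transformation. *)

definition pair_linear :: "(real \<Rightarrow> real \<Rightarrow> real) \<Rightarrow> bool" where
  "pair_linear f \<longleftrightarrow>
     (\<forall>p q x y x' y'. f (p * x + q * x') (p * y + q * y') = p * f x y + q * f x' y')"

text \<open>A pair-linear function is affine along the pencil (A v + B, C v + D); if it agrees with an
  affine function at two admissible points, its values at (A,C) and (B,D) are the coefficients.\<close>
lemma pencil_coefficients:
  assumes lin: "pair_linear f"
    and s: "s1 \<noteq> s2" "C * s1 + D \<noteq> 0" "C * s2 + D \<noteq> 0"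
    and eq: "\<And>v. C * v + D \<noteq> 0 \<Longrightarrow> f (A * v + B) (C * v + D) = v * a + b"
  shows "f A C = a \<and> f B D = b"
proof -
  have pencil: "f (A * v + B) (C * v + D) = v * f A C + f B D" for v
    using lin unfolding pair_linear_def by (metis mult.commute mult_1)
  have "s1 * f A C + f B D = s1 * a + b" "s2 * f A C + f B D = s2 * a + b"
    using eq[OF s(2)] eq[OF s(3)] pencil by simp_all
  then have "(s1 - s2) * (f A C - a) = 0" by (simp add: algebra_simps)
  then have "f A C = a" using s(1) by simp
  with \<open>s1 * f A C + f B D = s1 * a + b\<close> show ?thesis by simp
qed

lemma pair_linear_vanishes_on_basis:
  assumes lin: "pair_linear f" and det: "A * D - B * C \<noteq> 0"
    and zero: "f A C = 0" "f B D = 0"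
  shows "f x y = 0"
proof -
  define p where "p = (D * x - B * y) / (A * D - B * C)"
  define q where "q = (A * y - C * x) / (A * D - B * C)"
  have "p * A + q * B = (A * D - B * C) * x / (A * D - B * C)"
    "p * C + q * D = (A * D - B * C) * y / (A * D - B * C)"
    unfolding p_def q_def by (simp_all add: add_divide_distrib[symmetric] algebra_simps)
  then have "p * A + q * B = x" "p * C + q * D = y" using det by simp_all
  then have "f x y = p * f A C + q * f B D"
    using lin unfolding pair_linear_def by metis
  with zero show ?thesis by simp
qed

lemma two_admissible_points:
  assumes "A * D - B * C \<noteq> (0::real)"
  obtains s1 s2 where "s1 \<noteq> s2" "C * s1 + D \<noteq> 0" "C * s2 + D \<noteq> 0"
proof (cases "C = 0")
  case True
  then have "D \<noteq> 0" using assms by auto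
  then show ?thesis using that[of 0 1] True by simp
next
  case False
  show ?thesis using that[of "- D / C + 1" "- D / C + 2"] False by (simp add: field_simps)
qed

context
  fixes a1 a2 al1 al2 be1 be2 ga1 ga2 xi1 xi2 xi3 xi4 ze :: real
begin

text \<open>Homogenization of Q_+: each lattice value u is represented by a pair (u1, u0) with u = u1/u0.\<close>
definition qhom :: "real \<Rightarrow> real \<Rightarrow> real \<Rightarrow> real \<Rightarrow> real \<Rightarrow> real \<Rightarrow> real \<Rightarrow> real \<Rightarrow> real" where
  "qhom x1 x0 y1 y0 z1 z0 w1 w0 =
     a1 * (x1*y0*z0*w0 + x0*y0*z0*w1) + a2 * (x0*y1*z0*w0 + x0*y0*z1*w0)
     + (al1 - al2) * x1*y1*z0*w0 + (al1 + al2) * x0*y0*z1*w1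
     + (be1 - be2) * x1*y0*z1*w0 + (be1 + be2) * x0*y1*z0*w1
     + ga1 * x1*y0*z0*w1 + ga2 * x0*y1*z1*w0
     + (xi1 - xi3) * x1*y1*z1*w0 + (xi1 + xi3) * x1*y1*z0*w1
     + (xi2 - xi4) * x0*y1*z1*w1 + (xi2 + xi4) * x1*y0*z1*w1
     + ze * x1*y1*z1*w1"

lemma qplus_homogenized:
  assumes "x0 \<noteq> 0" "y0 \<noteq> 0" "z0 \<noteq> 0" "w0 \<noteq> 0"
  shows "x0 * y0 * z0 * w0 *
           Qplus a1 a2 al1 al2 be1 be2 ga1 ga2 xi1 xi2 xi3 xi4 ze (x1/x0) (y1/y0) (z1/z0) (w1/w0)
         = qhom x1 x0 y1 y0 z1 z0 w1 w0"
  using assms by (simp add: Qplus_def qhom_def field_simps)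

lemma qhom_linear_1: "pair_linear (\<lambda>x1 x0. qhom x1 x0 y1 y0 z1 z0 w1 w0)"
  by (simp add: pair_linear_def qhom_def algebra_simps)

lemma qhom_linear_2: "pair_linear (\<lambda>y1 y0. qhom x1 x0 y1 y0 z1 z0 w1 w0)"
  by (simp add: pair_linear_def qhom_def algebra_simps)

lemma qhom_linear_3: "pair_linear (\<lambda>z1 z0. qhom x1 x0 y1 y0 z1 z0 w1 w0)"
  by (simp add: pair_linear_def qhom_def algebra_simps)

lemma qhom_linear_4: "pair_linear (\<lambda>w1 w0. qhom x1 x0 y1 y0 z1 z0 w1 w0)"
  by (simp add: pair_linear_def qhom_def algebra_simps)

text \<open>Peeling off the four pencil variables one at a time: an identity
  qhom (pencil v1) ... (pencil v4) = c (v1 + v4 + r (v2 + v3)) determines the values of qhom on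
  the basis (A,C), (B,D).  Only the vanishing values caused by the absence of mixed terms are
  recorded.\<close>
lemma qhom_basis_values:
  assumes s: "s1 \<noteq> s2" "C * s1 + D \<noteq> 0" "C * s2 + D \<noteq> 0"
    and hyp: "\<And>v1 v2 v3 v4. C * v1 + D \<noteq> 0 \<Longrightarrow> C * v2 + D \<noteq> 0 \<Longrightarrow> C * v3 + D \<noteq> 0 \<Longrightarrow>
               C * v4 + D \<noteq> 0 \<Longrightarrow>
               qhom (A*v1+B) (C*v1+D) (A*v2+B) (C*v2+D) (A*v3+B) (C*v3+D) (A*v4+B) (C*v4+D)
               = c * (v1 + v4 + r * (v2 + v3))"
  shows "qhom A C A C A C A C = 0" "qhom A C A C A C B D = 0"
    and "qhom A C A C B D A C = 0" "qhom A C A C B D B D = 0"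
    and "qhom B D A C A C A C = 0"
proof -
  note peel = pencil_coefficients[OF _ s]
  have slot1: "qhom A C (A*v2+B) (C*v2+D) (A*v3+B) (C*v3+D) (A*v4+B) (C*v4+D) = c
      \<and> qhom B D (A*v2+B) (C*v2+D) (A*v3+B) (C*v3+D) (A*v4+B) (C*v4+D) = c * (v4 + r * (v2 + v3))"
    if "C * v2 + D \<noteq> 0" "C * v3 + D \<noteq> 0" "C * v4 + D \<noteq> 0" for v2 v3 v4
    by (rule peel[OF qhom_linear_1]) (subst hyp, use that in \<open>simp_all add: algebra_simps\<close>)
  have slot2: "qhom A C A C (A*v3+B) (C*v3+D) (A*v4+B) (C*v4+D) = 0
      \<and> qhom B D A C (A*v3+B) (C*v3+D) (A*v4+B) (C*v4+D) = c * r"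
    if "C * v3 + D \<noteq> 0" "C * v4 + D \<noteq> 0" for v3 v4
  proof -
    have "qhom A C A C (A*v3+B) (C*v3+D) (A*v4+B) (C*v4+D) = 0 \<and>
          qhom A C B D (A*v3+B) (C*v3+D) (A*v4+B) (C*v4+D) = c"
      by (rule peel[OF qhom_linear_2]) (simp add: slot1 that)
    moreover have "qhom B D A C (A*v3+B) (C*v3+D) (A*v4+B) (C*v4+D) = c * r \<and>
          qhom B D B D (A*v3+B) (C*v3+D) (A*v4+B) (C*v4+D) = c * (v4 + r * v3)"
      by (rule peel[OF qhom_linear_2]) (subst slot1, use that in \<open>simp_all add: algebra_simps\<close>)
    ultimately show ?thesis by simp
  qed
  have slot3: "qhom A C A C A C (A*v4+B) (C*v4+D) = 0 \<and> qhom A C A C B D (A*v4+B) (C*v4+D) = 0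
      \<and> qhom B D A C A C (A*v4+B) (C*v4+D) = 0"
    if "C * v4 + D \<noteq> 0" for v4
  proof -
    have "qhom A C A C A C (A*v4+B) (C*v4+D) = 0 \<and> qhom A C A C B D (A*v4+B) (C*v4+D) = 0"
      by (rule peel[OF qhom_linear_3]) (simp add: slot2 that)
    moreover have "qhom B D A C A C (A*v4+B) (C*v4+D) = 0 \<and>
          qhom B D A C B D (A*v4+B) (C*v4+D) = c * r"
      by (rule peel[OF qhom_linear_3]) (simp add: slot2 that)
    ultimately show ?thesis by simp
  qed
  have "qhom A C A C A C A C = 0 \<and> qhom A C A C A C B D = 0"
    by (rule peel[OF qhom_linear_4]) (simp add: slot3)
  moreover have "qhom A C A C B D A C = 0 \<and> qhom A C A C B D B D = 0"
    by (rule peel[OF qhom_linear_4]) (simp add: slot3)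
  moreover have "qhom B D A C A C A C = 0 \<and> qhom B D A C A C B D = 0"
    by (rule peel[OF qhom_linear_4]) (simp add: slot3)
  ultimately show "qhom A C A C A C A C = 0" "qhom A C A C A C B D = 0"
    "qhom A C A C B D A C = 0" "qhom A C A C B D B D = 0" "qhom B D A C A C A C = 0"
    by simp_all
qed

lemma linearizable_necessary:
  assumes det: "A * D - B * C \<noteq> 0"
    and lin: "linearizes (Qplus a1 a2 al1 al2 be1 be2 ga1 ga2 xi1 xi2 xi3 xi4 ze)
                (\<lambda>v1 v2 v3 v4. v1 + v4 + r * (v2 + v3)) A B C D"
  shows "qhom A C A C 0 1 0 1 = 0" "qhom A C A C 1 0 1 0 = 0" "qhom 1 0 A C A C A C = 0"
proof -
  obtain c where hc: "\<And>v1 v2 v3 v4. C * v1 + D \<noteq> 0 \<Longrightarrow> C * v2 + D \<noteq> 0 \<Longrightarrow> C * v3 + D \<noteq> 0 \<Longrightarrow>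
      C * v4 + D \<noteq> 0 \<Longrightarrow>
      (C * v1 + D) * (C * v2 + D) * (C * v3 + D) * (C * v4 + D) *
        Qplus a1 a2 al1 al2 be1 be2 ga1 ga2 xi1 xi2 xi3 xi4 ze
          (moeb A B C D v1) (moeb A B C D v2) (moeb A B C D v3) (moeb A B C D v4)
      = c * (v1 + v4 + r * (v2 + v3))"
    using lin unfolding linearizes_def by blast
  have hyp: "qhom (A*v1+B) (C*v1+D) (A*v2+B) (C*v2+D) (A*v3+B) (C*v3+D) (A*v4+B) (C*v4+D)
             = c * (v1 + v4 + r * (v2 + v3))"
    if "C * v1 + D \<noteq> 0" "C * v2 + D \<noteq> 0" "C * v3 + D \<noteq> 0" "C * v4 + D \<noteq> 0" for v1 v2 v3 v4
    using hc[OF that] qplus_homogenized[OF that] unfolding moeb_def by simp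
  obtain s1 s2 where s: "s1 \<noteq> s2" "C * s1 + D \<noteq> 0" "C * s2 + D \<noteq> 0"
    using two_admissible_points[OF det] by blast
  note K = qhom_basis_values[OF s hyp]
  have "qhom A C A C A C w1 w0 = 0" "qhom A C A C B D w1 w0 = 0" for w1 w0
    by (rule pair_linear_vanishes_on_basis[OF qhom_linear_4 det], use K in simp_all)+
  then have "qhom A C A C z1 z0 w1 w0 = 0" for z1 z0 w1 w0
    by (rule pair_linear_vanishes_on_basis[OF qhom_linear_3 det])
  then show "qhom A C A C 0 1 0 1 = 0" "qhom A C A C 1 0 1 0 = 0" by simp_all
  show "qhom 1 0 A C A C A C = 0"
    by (rule pair_linear_vanishes_on_basis[OF qhom_linear_1 det]) (use K in simp_all)
qed

end

definition qfam :: "real \<Rightarrow> real \<Rightarrow> real \<Rightarrow> real \<Rightarrow> real \<Rightarrow> real \<Rightarrow> real \<Rightarrow> real \<Rightarrow> real" where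
  "qfam a1 a2 ga1 ze =
     Qplus a1 a2
       ((a1 + a2) * ga1 / (2 * a1)) 0 ((a1 + a2) * ga1 / (2 * a1)) 0
       ga1 (a2 * ga1 / a1)
       (3 * (a1 + a2) * ga1^2 / (8 * a1^2)) (3 * (a1 + a2) * ga1^2 / (8 * a1^2))
       ((a1 - a2) * ga1^2 / (8 * a1^2)) ((a1 - a2) * ga1^2 / (8 * a1^2))
       ze"

lemma qfam_linearized:
  assumes "a1 \<noteq> 0" "A \<noteq> 0" "D \<noteq> 0" and ze: "ze = (a1 + a2) * ga1^3 / (4 * a1^3)"
  shows "linearizes (qfam a1 a2 ga1 ze) (\<lambda>v1 v2 v3 v4. v1 + v4 + a2 / a1 * (v2 + v3))
           A 0 (- A * ga1 / (2 * a1)) D"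
  unfolding linearizes_def
proof (intro exI[of _ "a1 * A * D^3"] conjI allI impI)
  show "a1 * A * D^3 \<noteq> 0" using assms by simp
  fix v1 v2 v3 v4
  define C where "C = - A * ga1 / (2 * a1)"
  assume "C * v1 + D \<noteq> 0" "C * v2 + D \<noteq> 0" "C * v3 + D \<noteq> 0" "C * v4 + D \<noteq> 0"
  then have "(C*v1+D) * (C*v2+D) * (C*v3+D) * (C*v4+D) *
        qfam a1 a2 ga1 ze (moeb A 0 C D v1) (moeb A 0 C D v2) (moeb A 0 C D v3) (moeb A 0 C D v4)
      = qhom a1 a2 ((a1 + a2) * ga1 / (2 * a1)) 0 ((a1 + a2) * ga1 / (2 * a1)) 0 ga1 (a2 * ga1 / a1)
          (3 * (a1 + a2) * ga1^2 / (8 * a1^2)) (3 * (a1 + a2) * ga1^2 / (8 * a1^2))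
          ((a1 - a2) * ga1^2 / (8 * a1^2)) ((a1 - a2) * ga1^2 / (8 * a1^2)) ze
          (A*v1) (C*v1+D) (A*v2) (C*v2+D) (A*v3) (C*v3+D) (A*v4) (C*v4+D)"
    unfolding qfam_def moeb_def by (simp add: qplus_homogenized)
  also have "\<dots> = a1 * A * D^3 * (v1 + v4 + a2 / a1 * (v2 + v3))"
    unfolding qhom_def C_def ze using assms(1)
    by (simp add: field_simps power2_eq_square power3_eq_cube)
  finally show "(C*v1+D) * (C*v2+D) * (C*v3+D) * (C*v4+D) *
        qfam a1 a2 ga1 ze (moeb A 0 C D v1) (moeb A 0 C D v2) (moeb A 0 C D v3) (moeb A 0 C D v4)
      = a1 * A * D^3 * (v1 + v4 + a2 / a1 * (v2 + v3))" .
qed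

lemma qfam_linearizable_critical:
  assumes a1: "a1 \<noteq> 0" and a12: "a1 + a2 \<noteq> 0" and det: "A * D - B * C \<noteq> 0"
    and lin: "linearizes (qfam a1 a2 ga1 ze) (\<lambda>v1 v2 v3 v4. v1 + v4 + a2 / a1 * (v2 + v3)) A B C D"
  shows "ze = (a1 + a2) * ga1^3 / (4 * a1^3)"
proof -
  define al where "al = (a1 + a2) * ga1 / (2 * a1)"
  define xi where "xi = 3 * (a1 + a2) * ga1^2 / (8 * a1^2)"
  define xi' where "xi' = (a1 - a2) * ga1^2 / (8 * a1^2)"
  have "qfam a1 a2 ga1 ze = Qplus a1 a2 al 0 al 0 ga1 (a2 * ga1 / a1) xi xi xi' xi' ze"
    unfolding qfam_def al_def xi_def xi'_def ..
  note nec = linearizable_necessary[OF det lin[unfolded this]]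
  have E1: "(a1 + a2) * A * C + al * A * A = 0"
    and E2: "al * C * C + 2 * xi * A * C + ze * A * A = 0"
    using nec(1,2) unfolding qhom_def by (simp_all add: algebra_simps)
  show ?thesis
  proof (cases "A = 0")
    case True
    then have "C \<noteq> 0" using det by auto
    with E2 True have "ga1 = 0" unfolding al_def using a1 a12 by simp
    with nec(3) True have "a1 * C * C * C = 0" by (simp add: qhom_def)
    with \<open>C \<noteq> 0\<close> a1 show ?thesis by simp
  next
    case False
    have "A * ((a1 + a2) * C + al * A) = 0" using E1 by (simp add: algebra_simps)
    then have "(a1 + a2) * C + al * A = 0" using False by simp
    then have "(a1 + a2) * (A * ga1 + 2 * a1 * C) = 0"
      unfolding al_def using a1 by (simp add: field_simps)
    then have "A * ga1 + 2 * a1 * C = 0" using a12 by simp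
    then have C: "C = - A * ga1 / (2 * a1)" using a1 by (simp add: field_simps)
    have "ze * A * A = - (al * C * C + 2 * xi * A * C)" using E2 by simp
    also have "\<dots> = (a1 + a2) * ga1^3 / (4 * a1^3) * A * A"
      unfolding C al_def xi_def using a1 by (simp add: field_simps power2_eq_square power3_eq_cube)
    finally have "(ze - (a1 + a2) * ga1^3 / (4 * a1^3)) * (A * A) = 0"
      by (simp add: algebra_simps)
    then show ?thesis using False by simp
  qed
qed

theorem mainTheorem5:
  fixes a1 a2 ga1 ze :: real
  assumes "a1 \<noteq> 0" and "a2 \<noteq> 0" and "\<bar>a1\<bar> \<noteq> \<bar>a2\<bar>"
  defines "Q \<equiv> Qplus a1 a2
              ((a1 + a2) * ga1 / (2 * a1)) 0 ((a1 + a2) * ga1 / (2 * a1)) 0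
              ga1 (a2 * ga1 / a1)
              (3 * (a1 + a2) * ga1^2 / (8 * a1^2)) (3 * (a1 + a2) * ga1^2 / (8 * a1^2))
              ((a1 - a2) * ga1^2 / (8 * a1^2)) ((a1 - a2) * ga1^2 / (8 * a1^2))
              ze"
    and "L \<equiv> (\<lambda>v1 v2 v3 v4. v1 + v4 + a2 / a1 * (v2 + v3))"
  shows "((\<exists>A B C D. A * D - B * C \<noteq> 0 \<and> linearizes Q L A B C D)
           \<longleftrightarrow> ze = (a1 + a2) * ga1^3 / (4 * a1^3))
         \<and> (ze = (a1 + a2) * ga1^3 / (4 * a1^3) \<longrightarrow>
              (\<forall>A D. A \<noteq> 0 \<longrightarrow> D \<noteq> 0 \<longrightarrow> linearizes Q L A 0 (- A * ga1 / (2 * a1)) D))"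
proof -
  have a12: "a1 + a2 \<noteq> 0" using assms(3) by (auto simp: add_eq_0_iff)
  have Q: "Q = qfam a1 a2 ga1 ze" unfolding Q_def qfam_def ..
  have sufficient: "linearizes Q L A 0 (- A * ga1 / (2 * a1)) D"
    if "ze = (a1 + a2) * ga1^3 / (4 * a1^3)" "A \<noteq> 0" "D \<noteq> 0" for A D
    unfolding Q L_def by (rule qfam_linearized[OF assms(1) that(2,3,1)])
  have necessary: "ze = (a1 + a2) * ga1^3 / (4 * a1^3)"
    if "A * D - B * C \<noteq> 0" "linearizes Q L A B C D" for A B C D
    using qfam_linearizable_critical[OF assms(1) a12 that(1)] that(2) unfolding Q L_def .
  have existence: "\<exists>A B C D. A * D - B * C \<noteq> 0 \<and> linearizes Q L A B C D"
    if ze: "ze = (a1 + a2) * ga1^3 / (4 * a1^3)"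
  proof -
    have "1 * 1 - 0 * (- 1 * ga1 / (2 * a1)) \<noteq> (0::real)" by simp
    with sufficient[OF ze one_neq_zero one_neq_zero] show ?thesis by blast
  qed
  show ?thesis using necessary existence sufficient by blast
qed

end
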